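(* Let $\mathbf{A}\in\mathbb{R}^{m\times n}$, $\mathbf{b}\in\mathbb{R}^m$, $\mathbf{c}\in\mathbb{R}^n$ define the integer linear program $\min_{\mathbf{x}}\{\mathbf{c}^\top\mathbf{x} \mid \mathbf{A}\mathbf{x}\le \mathbf{b},\ \mathbf{x}\in\mathbb{Z}^n\}$, with bipartite representation $\mathcal{A}=\begin{bmatrix}\mathbf{A}&\mathbf{b}\\ \mathbf{c}^\top&0\end{bmatrix}\in\mathbb{R}^{(m+1)\times(n+1)}$. Let $f_\theta$ be a map from such $(m+1)\times(n+1)$ matrices to $\mathbb{R}^n$ that is permutation-equivariant with respect to variables and permutation-invariant with respect to constraints, i.e. $f_\theta(\pi^c(\mathcal{M}))=\pi^v(f_\theta(\mathcal{M}))$ for all $\pi\in S_n$ and $f_\theta(\sigma^r(\mathcal{M}))=f_\theta(\mathcal{M})$ for all $\sigma\in S_m$, for every input $\mathcal{M}$. If $\pi\in S_n$ is a formulation symmetry of the ILP, then $f_\theta(\mathcal{A})_i=f_\theta(\mathcal{A})_{\pi(i)}$ for all $i\in\{1,\dots,n\}$. Furthermore, for every orbit $\mathcal{O}$ of $\{1,\dots,n\}$ under the symmetry group $\mathcal{G}$ of the ILP, $f_\theta(\mathcal{A})_i=f_\theta(\mathcal{A})_j$ for all $i,j\in\mathcal{O}$.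
   Context: $S_n$ denotes the set of all permutations (bijections) of $\{1,\dots,n\}$. For $\pi\in S_n$, a vector $\mathbf{y}$ and a matrix $\mathbf{X}$ with at least $n$ rows/columns: $\pi^v(\mathbf{y})=[y_{\pi(1)},\dots,y_{\pi(n)},y_{n+1},\dots]^\top$ (permuting the top-most $n$ entries), $\pi^r(\mathbf{X})=[\mathbf{X}_{\pi(1),:},\dots,\mathbf{X}_{\pi(n),:},\mathbf{X}_{n+1,:},\dots]^\top$ (permuting the top-most $n$ rows), and $\pi^c(\mathbf{X})=[\mathbf{X}_{:,\pi(1)},\dots,\mathbf{X}_{:,\pi(n)},\mathbf{X}_{:,n+1},\dots]$ (permuting the left-most $n$ columns); analogously for $\sigma\in S_m$. A permutation $\pi\in S_n$ is a formulation symmetry of the ILP if there exists $\sigma\in S_m$ with $\pi^v(\mathbf{c})=\mathbf{c}$, $\sigma^v(\mathbf{b})=\mathbf{b}$, and $A_{\sigma(i),\pi(j)}=A_{i,j}$ for all $i,j$. The set of all formulation symmetries forms a group $\mathcal{G}$ (the symmetry group). The orbit of $i\in\{1,\dots,n\}$ under $\mathcal{G}$ is $\{\pi(i)\mid \pi\in\mathcal{G}\}$. *)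

theory Defs
  imports Complex_Main "HOL-Combinatorics.Permutations"
begin

text \<open>Conventions: indices are 0-based. Variables are 0..<n, constraints 0..<m.
  A permutation in S_n is a function pi with pi permutes {..<n}
  (identity outside {..<n}), so permuting the top-most n entries is
  composition with pi.\<close>

definition perm_v :: "(nat \<Rightarrow> nat) \<Rightarrow> (nat \<Rightarrow> real) \<Rightarrow> (nat \<Rightarrow> real)" where
  "perm_v p y = (\<lambda>i. y (p i))"

definition perm_r :: "(nat \<Rightarrow> nat) \<Rightarrow> (nat \<Rightarrow> nat \<Rightarrow> real) \<Rightarrow> (nat \<Rightarrow> nat \<Rightarrow> real)" where
  "perm_r p X = (\<lambda>i j. X (p i) j)"

definition perm_c :: "(nat \<Rightarrow> nat) \<Rightarrow> (nat \<Rightarrow> nat \<Rightarrow> real) \<Rightarrow> (nat \<Rightarrow> nat \<Rightarrow> real)" where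
  "perm_c p X = (\<lambda>i j. X i (p j))"

text \<open>(m+1) x (n+1) real matrices: entries outside rows 0..m / columns 0..n are zero.\<close>
definition mats :: "nat \<Rightarrow> nat \<Rightarrow> (nat \<Rightarrow> nat \<Rightarrow> real) set" where
  "mats m n = {M. \<forall>i j. (m < i \<or> n < j) \<longrightarrow> M i j = 0}"

definition bip :: "nat \<Rightarrow> nat \<Rightarrow> (nat \<Rightarrow> nat \<Rightarrow> real) \<Rightarrow> (nat \<Rightarrow> real) \<Rightarrow> (nat \<Rightarrow> real)
    \<Rightarrow> (nat \<Rightarrow> nat \<Rightarrow> real)" where
  "bip m n A b c = (\<lambda>i j.
     if i < m \<and> j < n then A i j
     else if i < m \<and> j = n then b i
     else if i = m \<and> j < n then c j
     else 0)"

definition formulation_symmetry ::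
  "nat \<Rightarrow> nat \<Rightarrow> (nat \<Rightarrow> nat \<Rightarrow> real) \<Rightarrow> (nat \<Rightarrow> real) \<Rightarrow> (nat \<Rightarrow> real) \<Rightarrow> (nat \<Rightarrow> nat) \<Rightarrow> bool" where
  "formulation_symmetry m n A b c p \<longleftrightarrow>
     p permutes {..<n} \<and>
     (\<exists>s. s permutes {..<m} \<and>
          (\<forall>j<n. perm_v p c j = c j) \<and>
          (\<forall>i<m. perm_v s b i = b i) \<and>
          (\<forall>i<m. \<forall>j<n. A (s i) (p j) = A i j))"

definition symmetry_group ::
  "nat \<Rightarrow> nat \<Rightarrow> (nat \<Rightarrow> nat \<Rightarrow> real) \<Rightarrow> (nat \<Rightarrow> real) \<Rightarrow> (nat \<Rightarrow> real) \<Rightarrow> (nat \<Rightarrow> nat) set" where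
  "symmetry_group m n A b c = {p. formulation_symmetry m n A b c p}"

definition sym_orbit ::
  "nat \<Rightarrow> nat \<Rightarrow> (nat \<Rightarrow> nat \<Rightarrow> real) \<Rightarrow> (nat \<Rightarrow> real) \<Rightarrow> (nat \<Rightarrow> real) \<Rightarrow> nat \<Rightarrow> nat set" where
  "sym_orbit m n A b c i = {p i | p. p \<in> symmetry_group m n A b c}"

end

theory Submission
  imports Defs
begin

text \<open>A formulation symmetry \<open>p\<close>, together with its constraint permutation \<open>s\<close>, is an
  automorphism of the bipartite representation: permuting its columns by \<open>p\<close> and its rows by
  \<open>s\<close> gives back the same matrix. Applying \<open>f\<close>, row invariance discards \<open>s\<close> and column
  equivariance turns \<open>p\<close> into a permutation of the output, which is therefore fixed by \<open>p\<close>.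
  Within an orbit every value equals the value at the orbit's base point.\<close>

lemma bip_in_mats: "bip m n A b c \<in> mats m n"
  by (auto simp: mats_def bip_def)

lemma perm_c_in_mats:
  assumes "q permutes {..<n}" and "M \<in> mats m n"
  shows "perm_c q M \<in> mats m n"
  using assms by (auto simp: mats_def perm_c_def permutes_not_in)

lemma formulation_symmetry_permutes:
  "formulation_symmetry m n A b c p \<Longrightarrow> p permutes {..<n}"
  by (simp add: formulation_symmetry_def)

lemma formulation_symmetry_fixes_bip:
  assumes "formulation_symmetry m n A b c p"
  obtains s where "s permutes {..<m}"
    and "perm_r s (perm_c p (bip m n A b c)) = bip m n A b c"
proof -
  from assms obtain s where s: "s permutes {..<m}" and p: "p permutes {..<n}"
    and hc: "\<forall>j<n. c (p j) = c j" and hb: "\<forall>i<m. b (s i) = b i"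
    and hA: "\<forall>i<m. \<forall>j<n. A (s i) (p j) = A i j"
    by (auto simp: formulation_symmetry_def perm_v_def)
  have s_in: "s i < m \<longleftrightarrow> i < m" for i
    using s by (metis lessThan_iff permutes_in_image permutes_not_in)
  have p_in: "p j < n \<longleftrightarrow> j < n" for j
    using p by (metis lessThan_iff permutes_in_image permutes_not_in)
  have "perm_r s (perm_c p (bip m n A b c)) = bip m n A b c"
  proof (intro ext)
    fix i j
    have "s i = i" if "\<not> i < m" using s that by (simp add: permutes_not_in)
    moreover have "p j = j" if "\<not> j < n" using p that by (simp add: permutes_not_in)
    ultimately show "perm_r s (perm_c p (bip m n A b c)) i j = bip m n A b c i j"
      using hA hb hc s_in p_in by (auto simp: perm_r_def perm_c_def bip_def)
  qed
  with s show thesis by (rule that)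
qed

lemma equivariant_value_fixed_by_automorphism:
  fixes f :: "(nat \<Rightarrow> nat \<Rightarrow> real) \<Rightarrow> (nat \<Rightarrow> real)"
  assumes equiv: "\<And>M q. M \<in> mats m n \<Longrightarrow> q permutes {..<n} \<Longrightarrow>
                     \<forall>i<n. f (perm_c q M) i = perm_v q (f M) i"
      and inv: "\<And>M s. M \<in> mats m n \<Longrightarrow> s permutes {..<m} \<Longrightarrow>
                     \<forall>i<n. f (perm_r s M) i = f M i"
      and M: "M \<in> mats m n" and p: "p permutes {..<n}" and s: "s permutes {..<m}"
      and fixed: "perm_r s (perm_c p M) = M"
      and i: "i < n"
  shows "f M (p i) = f M i"
proof -
  have "f M (p i) = f (perm_c p M) i"
    using equiv[OF M p] i by (simp add: perm_v_def)
  also have "\<dots> = f (perm_r s (perm_c p M)) i"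
    using inv[OF perm_c_in_mats[OF p M] s] i by simp
  finally show ?thesis by (simp only: fixed)
qed

theorem proposition1:
  fixes m n :: nat
    and A :: "nat \<Rightarrow> nat \<Rightarrow> real" and b c :: "nat \<Rightarrow> real"
    and f :: "(nat \<Rightarrow> nat \<Rightarrow> real) \<Rightarrow> (nat \<Rightarrow> real)"
    and p :: "nat \<Rightarrow> nat"
  assumes equiv: "\<And>M q. M \<in> mats m n \<Longrightarrow> q permutes {..<n} \<Longrightarrow>
                     \<forall>i<n. f (perm_c q M) i = perm_v q (f M) i"
      and inv: "\<And>M s. M \<in> mats m n \<Longrightarrow> s permutes {..<m} \<Longrightarrow>
                     \<forall>i<n. f (perm_r s M) i = f M i"
      and sym: "formulation_symmetry m n A b c p"
  shows "(\<forall>i<n. f (bip m n A b c) i = f (bip m n A b c) (p i)) \<and>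
         (\<forall>k<n. \<forall>i\<in>sym_orbit m n A b c k. \<forall>j\<in>sym_orbit m n A b c k.
              f (bip m n A b c) i = f (bip m n A b c) j)"
proof -
  let ?M = "bip m n A b c"
  have fixed: "f ?M (q k) = f ?M k" if q: "formulation_symmetry m n A b c q" and k: "k < n" for q k
  proof -
    obtain s where "s permutes {..<m}" and "perm_r s (perm_c q ?M) = ?M"
      using formulation_symmetry_fixes_bip[OF q] .
    then show ?thesis
      using equivariant_value_fixed_by_automorphism[OF equiv inv bip_in_mats
          formulation_symmetry_permutes[OF q]] k by blast
  qed
  then show ?thesis
    using sym by (force simp: sym_orbit_def symmetry_group_def)
qed

end
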